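(* Let $\mathbb{F}$ be a field with $\operatorname{char}(\mathbb{F})\neq 2$ and let $G$ be a non-abelian group with a group involution $\ast$ and a non-identity orientation $\sigma:G\to\{\pm1\}$ such that $gg^\ast\in N=\ker\sigma$ for all $g\in G$. Then $\mathbb{F}G$ is normal with respect to the oriented group involution $\circledast$ if and only if one of the following holds: (1) $N$ is abelian, $G\setminus N\subseteq G^+$, and $n^\ast=a^{-1}na=ana^{-1}$ for all $n\in N$ and all $a\in G\setminus N$; (2) $N$ and $G$ are LC-groups, $G$ has a unique non-identity commutator $s$, there exists $g_0\in(G\setminus N)\cap\zeta(G)$ with $g_0^\ast=sg_0$, and $\ast$ is given by $g^\ast=g$ if $g\in N\cap\zeta(G)$ or $g\in(G\setminus N)\setminus\zeta(G)$, and $g^\ast=sg$ otherwise.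
   Context: A group involution on $G$ is a map $\ast:G\to G$ with $(gh)^\ast=h^\ast g^\ast$ and $(g^\ast)^\ast=g$. An orientation is a group homomorphism $\sigma:G\to\{\pm1\}$. The oriented group involution is $(\sum_g\alpha_g g)^\circledast=\sum_g\alpha_g\sigma(g)g^\ast$ on $\mathbb{F}G$ (an algebra involution because $gg^\ast\in\ker\sigma$). $\mathbb{F}G$ is normal if $\alpha\alpha^\circledast=\alpha^\circledast\alpha$ for all $\alpha\in\mathbb{F}G$. $G^+=\{g\in G:g^\ast=g\}$, $\zeta(G)$ is the center of $G$, $(g,h)=g^{-1}h^{-1}gh$, and "unique non-identity commutator $s$" means $\{(g,h):g,h\in G\}=\{1,s\}$. A group $H$ is an LC-group if it is non-abelian and for all $g,h\in H$: $gh=hg$ iff at least one of $g,h,gh$ lies in $\zeta(H)$. *)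

theory Defs
  imports "HOL-Algebra.Group"
begin

definition grp_center :: "('a, 'b) monoid_scheme \<Rightarrow> 'a set \<Rightarrow> 'a set" where
  "grp_center G H = {z \<in> H. \<forall>x \<in> H. z \<otimes>\<^bsub>G\<^esub> x = x \<otimes>\<^bsub>G\<^esub> z}"

definition abelian_on :: "('a, 'b) monoid_scheme \<Rightarrow> 'a set \<Rightarrow> bool" where
  "abelian_on G H \<longleftrightarrow> (\<forall>x \<in> H. \<forall>y \<in> H. x \<otimes>\<^bsub>G\<^esub> y = y \<otimes>\<^bsub>G\<^esub> x)"

definition LC_group :: "('a, 'b) monoid_scheme \<Rightarrow> 'a set \<Rightarrow> bool" where
  "LC_group G H \<longleftrightarrow> \<not> abelian_on G H \<and>
     (\<forall>g \<in> H. \<forall>h \<in> H. g \<otimes>\<^bsub>G\<^esub> h = h \<otimes>\<^bsub>G\<^esub> g \<longleftrightarrow>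
        (g \<in> grp_center G H \<or> h \<in> grp_center G H \<or> g \<otimes>\<^bsub>G\<^esub> h \<in> grp_center G H))"

definition commutator :: "('a, 'b) monoid_scheme \<Rightarrow> 'a \<Rightarrow> 'a \<Rightarrow> 'a" where
  "commutator G g h = inv\<^bsub>G\<^esub> g \<otimes>\<^bsub>G\<^esub> inv\<^bsub>G\<^esub> h \<otimes>\<^bsub>G\<^esub> g \<otimes>\<^bsub>G\<^esub> h"

definition commutators :: "('a, 'b) monoid_scheme \<Rightarrow> 'a set" where
  "commutators G = {commutator G g h | g h. g \<in> carrier G \<and> h \<in> carrier G}"

definition group_involution :: "('a, 'b) monoid_scheme \<Rightarrow> ('a \<Rightarrow> 'a) \<Rightarrow> bool" where
  "group_involution G st \<longleftrightarrow> (\<forall>g \<in> carrier G. st g \<in> carrier G) \<and>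
     (\<forall>g \<in> carrier G. \<forall>h \<in> carrier G. st (g \<otimes>\<^bsub>G\<^esub> h) = st h \<otimes>\<^bsub>G\<^esub> st g) \<and>
     (\<forall>g \<in> carrier G. st (st g) = g)"

definition orientation :: "('a, 'b) monoid_scheme \<Rightarrow> ('a \<Rightarrow> int) \<Rightarrow> bool" where
  "orientation G \<sigma> \<longleftrightarrow> (\<forall>g \<in> carrier G. \<sigma> g \<in> {1, -1}) \<and>
     (\<forall>g \<in> carrier G. \<forall>h \<in> carrier G. \<sigma> (g \<otimes>\<^bsub>G\<^esub> h) = \<sigma> g * \<sigma> h)"

definition group_algebra :: "('a, 'b) monoid_scheme \<Rightarrow> ('a \<Rightarrow> 'f::field) set" where
  "group_algebra G = {\<alpha>. (\<forall>x. x \<notin> carrier G \<longrightarrow> \<alpha> x = 0) \<and> finite {x. \<alpha> x \<noteq> 0}}"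

definition ga_mult :: "('a, 'b) monoid_scheme \<Rightarrow> ('a \<Rightarrow> 'f::field) \<Rightarrow> ('a \<Rightarrow> 'f) \<Rightarrow> ('a \<Rightarrow> 'f)" where
  "ga_mult G \<alpha> \<beta> = (\<lambda>x. if x \<in> carrier G then
      (\<Sum>g \<in> {g \<in> carrier G. \<alpha> g \<noteq> 0}. \<alpha> g * \<beta> (inv\<^bsub>G\<^esub> g \<otimes>\<^bsub>G\<^esub> x)) else 0)"

text \<open>Oriented involution: (\<Sum> \<alpha>_g g)^\<circledast> = \<Sum> \<alpha>_g \<sigma>(g) g^*; coefficient at h is
  \<alpha>(h^*) \<sigma>(h^*), as * is a bijection of the carrier.\<close>
definition oriented_inv :: "('a, 'b) monoid_scheme \<Rightarrow> ('a \<Rightarrow> 'a) \<Rightarrow> ('a \<Rightarrow> int) \<Rightarrow> ('a \<Rightarrow> 'f::field) \<Rightarrow> ('a \<Rightarrow> 'f)" where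
  "oriented_inv G st \<sigma> \<alpha> = (\<lambda>h. if h \<in> carrier G then of_int (\<sigma> (st h)) * \<alpha> (st h) else 0)"

definition ga_normal :: "('a, 'b) monoid_scheme \<Rightarrow> ('a \<Rightarrow> 'a) \<Rightarrow> ('a \<Rightarrow> int) \<Rightarrow> ('a \<Rightarrow> 'f::field) set \<Rightarrow> bool" where
  "ga_normal G st \<sigma> FG \<longleftrightarrow> (\<forall>\<alpha> \<in> FG.
      ga_mult G \<alpha> (oriented_inv G st \<sigma> \<alpha>) = ga_mult G (oriented_inv G st \<sigma> \<alpha>) \<alpha>)"

end

theory Submission
  imports Defs
begin

(*
  Testing normality on the elements g and g + h^* of FG shows, as char F is not 2, that FG is
  normal exactly when every pair g, h of group elements is a normal pair: g and h commute, or
  sigma(g) = sigma(h) and gh = g^* h^*, hg = h^* g^*, or sigma(g) and sigma(h) differ and gh, hg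
  are fixed by *.  Conversely, for normal pairs the double sums expressing the coefficients of
  alpha alpha^* and alpha^* alpha agree term by term after symmetrisation.

  The group theory then splits on the kernel N of sigma.  If N is abelian, every a outside N
  fails to commute with some n in N (otherwise a would be central and G abelian), and the normal
  pair (a, n) forces a^* = a and n^* = a n a^-1 = a^-1 n a.  If N is not abelian, g^-1 g^* takes
  one value s on all non-central g in N; s is central of order two and is the only non-trivial
  commutator, the centre of N lies in the centre of G, and the description of * in (2) follows.
*)

lemma grp_center_iff: "z \<in> grp_center G H \<longleftrightarrow> z \<in> H \<and> (\<forall>x \<in> H. z \<otimes>\<^bsub>G\<^esub> x = x \<otimes>\<^bsub>G\<^esub> z)"
  unfolding grp_center_def by simp

context group
begin

lemma inv_mult_cancel_left [simp]: "x \<in> carrier G \<Longrightarrow> y \<in> carrier G \<Longrightarrow> inv x \<otimes> (x \<otimes> y) = y"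
  by (simp add: m_assoc [symmetric])

lemma mult_inv_cancel_left [simp]: "x \<in> carrier G \<Longrightarrow> y \<in> carrier G \<Longrightarrow> x \<otimes> (inv x \<otimes> y) = y"
  by (simp add: m_assoc [symmetric])

lemma commute_inv_left:
  assumes "x \<in> carrier G" "y \<in> carrier G" "x \<otimes> y = y \<otimes> x"
  shows "inv x \<otimes> y = y \<otimes> inv x"
proof -
  have "inv x \<otimes> y = inv x \<otimes> (y \<otimes> x \<otimes> inv x)" using assms(1,2) by (simp add: m_assoc)
  also have "\<dots> = inv x \<otimes> (x \<otimes> y \<otimes> inv x)" by (simp only: assms(3))
  also have "\<dots> = y \<otimes> inv x" using assms(1,2) by (simp add: m_assoc)
  finally show ?thesis .
qed

lemma commute_mult_self_iff:
  "g \<in> carrier G \<Longrightarrow> h \<in> carrier G \<Longrightarrow> g \<otimes> (g \<otimes> h) = g \<otimes> h \<otimes> g \<longleftrightarrow> g \<otimes> h = h \<otimes> g"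
  by (simp add: m_assoc)

lemma commute_mult_cancel_left:
  assumes "a \<in> carrier G" "b \<in> carrier G" "c \<in> carrier G"
    and "c \<otimes> a = a \<otimes> c" "c \<otimes> (a \<otimes> b) = a \<otimes> b \<otimes> c"
  shows "c \<otimes> b = b \<otimes> c"
proof -
  have "a \<otimes> (c \<otimes> b) = c \<otimes> (a \<otimes> b)" using assms(1-4) by (simp add: m_assoc [symmetric])
  also have "\<dots> = a \<otimes> (b \<otimes> c)" using assms by (simp add: m_assoc)
  finally show ?thesis using assms(1-3) by simp
qed

lemma commute_mult_cancel_right:
  assumes "a \<in> carrier G" "b \<in> carrier G" "c \<in> carrier G"
    and "c \<otimes> b = b \<otimes> c" "c \<otimes> (a \<otimes> b) = a \<otimes> b \<otimes> c"
  shows "c \<otimes> a = a \<otimes> c"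
proof -
  have "c \<otimes> a \<otimes> b = a \<otimes> b \<otimes> c" using assms by (simp add: m_assoc)
  also have "\<dots> = a \<otimes> c \<otimes> b" using assms by (simp add: m_assoc)
  finally show ?thesis using assms(1-3) by simp
qed

lemma mult_eq_mult_iff_right_conj:
  "a \<in> carrier G \<Longrightarrow> n \<in> carrier G \<Longrightarrow> m \<in> carrier G \<Longrightarrow> a \<otimes> n = m \<otimes> a \<longleftrightarrow> m = a \<otimes> n \<otimes> inv a"
  using inv_solve_right[of m "a \<otimes> n" a] by auto

lemma mult_eq_mult_iff_left_conj:
  "a \<in> carrier G \<Longrightarrow> n \<in> carrier G \<Longrightarrow> m \<in> carrier G \<Longrightarrow> a \<otimes> n = m \<otimes> a \<longleftrightarrow> n = inv a \<otimes> m \<otimes> a"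
  using inv_solve_left[of n a "m \<otimes> a"] by (auto simp: m_assoc)

lemma center_commute: "z \<in> grp_center G (carrier G) \<Longrightarrow> h \<in> carrier G \<Longrightarrow> z \<otimes> h = h \<otimes> z"
  unfolding grp_center_def by blast

lemma commute_if_mult_central:
  "g \<in> carrier G \<Longrightarrow> h \<in> carrier G \<Longrightarrow> g \<otimes> h \<in> grp_center G (carrier G) \<Longrightarrow> g \<otimes> h = h \<otimes> g"
  using center_commute[of "g \<otimes> h" g] commute_mult_self_iff[of g h] by simp

lemma central_mult_commute:
  assumes "c \<in> grp_center G (carrier G)" "c' \<in> grp_center G (carrier G)"
    and "m \<in> carrier G" "m' \<in> carrier G" "m \<otimes> m' = m' \<otimes> m"
  shows "c \<otimes> m \<otimes> (c' \<otimes> m') = c' \<otimes> m' \<otimes> (c \<otimes> m)"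
proof -
  have c: "c \<in> carrier G" "c' \<in> carrier G" using assms(1,2) unfolding grp_center_def by auto
  have "c \<otimes> m \<otimes> (c' \<otimes> m') = c \<otimes> (m \<otimes> c' \<otimes> m')" using c assms(3,4) by (simp add: m_assoc)
  also have "\<dots> = c \<otimes> (c' \<otimes> m \<otimes> m')" using center_commute[OF assms(2,3)] by simp
  also have "\<dots> = c \<otimes> c' \<otimes> (m \<otimes> m')" using c assms(3,4) by (simp add: m_assoc)
  also have "\<dots> = c' \<otimes> c \<otimes> (m' \<otimes> m)" using center_commute[OF assms(1) c(2)] assms(5) by simp
  also have "\<dots> = c' \<otimes> (c \<otimes> m' \<otimes> m)" using c assms(3,4) by (simp add: m_assoc)
  also have "\<dots> = c' \<otimes> (m' \<otimes> c \<otimes> m)"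
    using c assms(3,4) center_commute[OF assms(1,4)] by (simp add: m_assoc)
  also have "\<dots> = c' \<otimes> m' \<otimes> (c \<otimes> m)" using c assms(3,4) by (simp add: m_assoc)
  finally show ?thesis .
qed

lemma central_square_mult_cancel:
  assumes z: "z \<in> grp_center G (carrier G)" and zz: "z \<otimes> z = \<one>"
    and x: "x \<in> carrier G" and y: "y \<in> carrier G"
  shows "z \<otimes> x \<otimes> (z \<otimes> y) = x \<otimes> y"
proof -
  have zc: "z \<in> carrier G" using z unfolding grp_center_def by blast
  have "z \<otimes> x \<otimes> (z \<otimes> y) = z \<otimes> (x \<otimes> z) \<otimes> y" using zc x y by (simp add: m_assoc)
  also have "\<dots> = z \<otimes> z \<otimes> x \<otimes> y" using center_commute[OF z x] zc x y by (simp add: m_assoc)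
  also have "\<dots> = x \<otimes> y" using zz x y by simp
  finally show ?thesis .
qed

lemma commutator_closed: "g \<in> carrier G \<Longrightarrow> h \<in> carrier G \<Longrightarrow> commutator G g h \<in> carrier G"
  unfolding commutator_def by simp

lemma commutator_eq_inv_mult: "g \<in> carrier G \<Longrightarrow> h \<in> carrier G \<Longrightarrow>
  commutator G g h = inv (h \<otimes> g) \<otimes> (g \<otimes> h)"
  unfolding commutator_def by (simp add: inv_mult_group m_assoc)

lemma commutator_eq_one_iff: "g \<in> carrier G \<Longrightarrow> h \<in> carrier G \<Longrightarrow>
  commutator G g h = \<one> \<longleftrightarrow> g \<otimes> h = h \<otimes> g"
  using inv_solve_left'[of \<one> "h \<otimes> g" "g \<otimes> h"] by (simp add: commutator_eq_inv_mult)

lemma commutator_swap: "g \<in> carrier G \<Longrightarrow> h \<in> carrier G \<Longrightarrow>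
  commutator G h g = inv (commutator G g h)"
  by (simp add: commutator_eq_inv_mult inv_mult_group)

lemma commutator_eq_right_imp_one:
  assumes x: "x \<in> carrier G" and y: "y \<in> carrier G" and eq: "commutator G x y = y"
  shows "y = \<one>"
proof -
  have "inv x \<otimes> inv y \<otimes> x \<otimes> y = \<one> \<otimes> y" using eq y unfolding commutator_def by simp
  then have "inv x \<otimes> inv y \<otimes> x = \<one>" using x y right_cancel[of y "inv x \<otimes> inv y \<otimes> x" \<one>] by simp
  then have "x \<otimes> (inv x \<otimes> (inv y \<otimes> x)) = x \<otimes> \<one>" using x y by (simp add: m_assoc)
  then have "inv y \<otimes> x = x" using x y by simp
  then show ?thesis using x y by simp
qed

end

locale oriented_group_involution = group G for G (structure) +
  fixes st :: "'a \<Rightarrow> 'a" and \<sigma> :: "'a \<Rightarrow> int" and N :: "'a set"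
  assumes involution: "group_involution G st"
    and orientation: "orientation G \<sigma>"
    and N_def: "N = {g \<in> carrier G. \<sigma> g = 1}"
    and mult_st_in_N: "\<forall>g \<in> carrier G. g \<otimes> st g \<in> N"
begin

lemma st_closed [simp]: "g \<in> carrier G \<Longrightarrow> st g \<in> carrier G"
  using involution unfolding group_involution_def by blast

lemma st_mult: "g \<in> carrier G \<Longrightarrow> h \<in> carrier G \<Longrightarrow> st (g \<otimes> h) = st h \<otimes> st g"
  using involution unfolding group_involution_def by blast

lemma st_st [simp]: "g \<in> carrier G \<Longrightarrow> st (st g) = g"
  using involution unfolding group_involution_def by blast

lemma st_inv:
  assumes "g \<in> carrier G" shows "st (inv g) = inv (st g)"
proof -
  have "st (inv g) \<otimes> st g = st \<one>" using assms st_mult[of g "inv g"] by simp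
  also have "\<dots> = \<one>" using st_mult[of \<one> \<one>] r_cancel_one'[of "st \<one>" "st \<one>"] by simp
  finally show ?thesis using assms inv_equality[of "st (inv g)" "st g"] by simp
qed

lemma \<sigma>_mult [simp]: "g \<in> carrier G \<Longrightarrow> h \<in> carrier G \<Longrightarrow> \<sigma> (g \<otimes> h) = \<sigma> g * \<sigma> h"
  using orientation unfolding orientation_def by blast

lemma \<sigma>_cases: "g \<in> carrier G \<Longrightarrow> \<sigma> g = 1 \<or> \<sigma> g = -1"
  using orientation unfolding orientation_def by blast

lemma \<sigma>_inv [simp]: "g \<in> carrier G \<Longrightarrow> \<sigma> (inv g) = \<sigma> g"
  using \<sigma>_mult[of g "inv g"] \<sigma>_mult[of \<one> \<one>] \<sigma>_cases[of g] \<sigma>_cases[of "inv g"] \<sigma>_cases[of \<one>]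
  by (auto simp del: \<sigma>_mult)

lemma \<sigma>_st [simp]: "g \<in> carrier G \<Longrightarrow> \<sigma> (st g) = \<sigma> g"
  using mult_st_in_N \<sigma>_cases[of g] \<sigma>_cases[of "st g"] unfolding N_def by auto

lemma mem_N_iff: "n \<in> N \<longleftrightarrow> n \<in> carrier G \<and> \<sigma> n = 1"
  using N_def by simp

lemma not_in_N_iff: "a \<in> carrier G \<Longrightarrow> a \<notin> N \<longleftrightarrow> \<sigma> a = -1"
  using N_def \<sigma>_cases[of a] by auto

lemma N_carrier: "n \<in> N \<Longrightarrow> n \<in> carrier G"
  by (simp add: mem_N_iff)

lemma mult_in_N_iff: "g \<in> carrier G \<Longrightarrow> h \<in> carrier G \<Longrightarrow> g \<otimes> h \<in> N \<longleftrightarrow> (g \<in> N \<longleftrightarrow> h \<in> N)"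
  using \<sigma>_cases[of g] \<sigma>_cases[of h] by (auto simp: mem_N_iff)

lemma inv_in_N_iff: "g \<in> carrier G \<Longrightarrow> inv g \<in> N \<longleftrightarrow> g \<in> N"
  by (simp add: mem_N_iff)

lemma st_in_N_iff: "g \<in> carrier G \<Longrightarrow> st g \<in> N \<longleftrightarrow> g \<in> N"
  by (simp add: mem_N_iff)

lemma central_if_commute_N:
  assumes a: "a \<in> carrier G" "a \<notin> N" and comm: "\<forall>n \<in> N. a \<otimes> n = n \<otimes> a"
  shows "a \<in> grp_center G (carrier G)"
  unfolding grp_center_def
proof (intro CollectI conjI ballI)
  fix x assume x: "x \<in> carrier G"
  show "a \<otimes> x = x \<otimes> a"
  proof (cases "x \<in> N")
    case True
    then show ?thesis using comm by blast
  next
    case False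
    define m where "m = inv a \<otimes> x"
    have m: "m \<in> N" using a x False by (simp add: m_def mult_in_N_iff inv_in_N_iff)
    have xm: "x = a \<otimes> m" using a x by (simp add: m_def)
    have "a \<otimes> x = a \<otimes> (m \<otimes> a)" using xm comm m by simp
    also have "\<dots> = x \<otimes> a" using xm a m N_carrier by (simp add: m_assoc)
    finally show ?thesis .
  qed
qed (use a in simp)

lemma abelian_if_central_outside_N:
  assumes a: "a \<in> carrier G" "a \<notin> N" "a \<in> grp_center G (carrier G)" and ab: "abelian_on G N"
  shows "abelian_on G (carrier G)"
proof -
  have one: "\<one> \<in> grp_center G (carrier G)" unfolding grp_center_def by simp
  have decomp: "\<exists>c m. c \<in> grp_center G (carrier G) \<and> m \<in> N \<and> x = c \<otimes> m"
    if x: "x \<in> carrier G" for x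
  proof (cases "x \<in> N")
    case True
    then show ?thesis using one x by (intro exI[of _ \<one>] exI[of _ x]) simp
  next
    case False
    then show ?thesis using a x
      by (intro exI[of _ a] exI[of _ "inv a \<otimes> x"]) (simp add: mult_in_N_iff inv_in_N_iff)
  qed
  show ?thesis unfolding abelian_on_def
  proof (intro ballI)
    fix x y assume "x \<in> carrier G" "y \<in> carrier G"
    then obtain c m c' m' where "c \<in> grp_center G (carrier G)" "m \<in> N" "x = c \<otimes> m"
      "c' \<in> grp_center G (carrier G)" "m' \<in> N" "y = c' \<otimes> m'" using decomp by meson
    moreover have "m \<otimes> m' = m' \<otimes> m" using ab \<open>m \<in> N\<close> \<open>m' \<in> N\<close> unfolding abelian_on_def by blast
    ultimately show "x \<otimes> y = y \<otimes> x" using central_mult_commute[of c c' m m'] N_carrier by simp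
  qed
qed

end

section \<open>Normality of the group algebra\<close>

definition supp :: "('a \<Rightarrow> 'f::zero) \<Rightarrow> 'a set" where
  "supp \<alpha> = {x. \<alpha> x \<noteq> 0}"

lemma group_algebra_supp:
  assumes "\<alpha> \<in> group_algebra G"
  shows "finite (supp \<alpha>)" "supp \<alpha> \<subseteq> carrier G"
  using assms unfolding group_algebra_def supp_def by auto

lemma ga_mult_outside_carrier: "x \<notin> carrier G \<Longrightarrow> ga_mult G \<alpha> \<beta> x = 0"
  unfolding ga_mult_def by simp

lemma (in group) ga_mult_eq_double_sum:
  fixes \<alpha> \<beta> :: "'a \<Rightarrow> 'f::field"
  assumes \<alpha>: "\<alpha> \<in> group_algebra G" and \<beta>: "\<beta> \<in> group_algebra G" and x: "x \<in> carrier G"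
  shows "ga_mult G \<alpha> \<beta> x = (\<Sum>g\<in>supp \<alpha>. \<Sum>h\<in>supp \<beta>. \<alpha> g * \<beta> h * of_bool (g \<otimes> h = x))"
proof -
  have "{g \<in> carrier G. \<alpha> g \<noteq> 0} = supp \<alpha>"
    using group_algebra_supp(2)[OF \<alpha>] unfolding supp_def by auto
  then have "ga_mult G \<alpha> \<beta> x = (\<Sum>g\<in>supp \<alpha>. \<alpha> g * \<beta> (inv g \<otimes> x))"
    unfolding ga_mult_def using x by simp
  also have "\<dots> = (\<Sum>g\<in>supp \<alpha>. \<Sum>h\<in>supp \<beta>. \<alpha> g * \<beta> h * of_bool (g \<otimes> h = x))"
  proof (rule sum.cong [OF refl])
    fix g assume "g \<in> supp \<alpha>"
    then have g: "g \<in> carrier G" using group_algebra_supp(2)[OF \<alpha>] by blast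
    have "(\<Sum>h\<in>supp \<beta>. \<alpha> g * \<beta> h * of_bool (g \<otimes> h = x)) =
          (\<Sum>h\<in>supp \<beta>. if h = inv g \<otimes> x then \<alpha> g * \<beta> h else 0)"
      using group_algebra_supp(2)[OF \<beta>] g x
      by (intro sum.cong refl) (auto simp: inv_solve_left simp del: sum_mult_of_bool_eq)
    also have "\<dots> = \<alpha> g * \<beta> (inv g \<otimes> x)"
      using group_algebra_supp(1)[OF \<beta>] by (simp add: supp_def)
    finally show "\<alpha> g * \<beta> (inv g \<otimes> x) = (\<Sum>h\<in>supp \<beta>. \<alpha> g * \<beta> h * of_bool (g \<otimes> h = x))" ..
  qed
  finally show ?thesis .
qed

lemma double_sum_eq_if_symmetric_parts_eq:
  fixes F H :: "'a \<Rightarrow> 'a \<Rightarrow> 'f::field"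
  assumes two: "(2::'f) \<noteq> 0"
    and parts: "\<And>x y. x \<in> A \<Longrightarrow> y \<in> A \<Longrightarrow> F x y + F y x = H x y + H y x"
  shows "(\<Sum>x\<in>A. \<Sum>y\<in>A. F x y) = (\<Sum>x\<in>A. \<Sum>y\<in>A. H x y)"
proof -
  have double: "2 * (\<Sum>x\<in>A. \<Sum>y\<in>A. K x y) = (\<Sum>x\<in>A. \<Sum>y\<in>A. K x y + K y x)"
    for K :: "'a \<Rightarrow> 'a \<Rightarrow> 'f"
  proof -
    have swap: "(\<Sum>x\<in>A. \<Sum>y\<in>A. K y x) = (\<Sum>x\<in>A. \<Sum>y\<in>A. K x y)"
      by (rule sum.swap)
    show ?thesis by (simp only: sum.distrib swap mult_2)
  qed
  have "(\<Sum>x\<in>A. \<Sum>y\<in>A. F x y + F y x) = (\<Sum>x\<in>A. \<Sum>y\<in>A. H x y + H y x)"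
    using parts by (intro sum.cong refl)
  then have "2 * (\<Sum>x\<in>A. \<Sum>y\<in>A. F x y) = 2 * (\<Sum>x\<in>A. \<Sum>y\<in>A. H x y)"
    by (simp only: double)
  then show ?thesis using two by simp
qed

lemma sign_indicator_eq_cases:
  fixes a b :: int
  assumes two: "(2::'f::field) \<noteq> 0" and a: "a = 1 \<or> a = -1" and b: "b = 1 \<or> b = -1"
    and eq: "of_int b + of_int a * of_bool P = (of_int a * of_bool Q :: 'f)"
  shows "if a = b then Q else P"
proof -
  have "(1::'f) + 1 \<noteq> 0" using two by simp
  then have "(1::'f) \<noteq> -1" "- 1 - (1::'f) \<noteq> 0"
    by (auto simp: eq_neg_iff_add_eq_0 simp flip: minus_add_distrib)
  with a b show ?thesis using eq \<open>(1::'f) + 1 \<noteq> 0\<close> by (cases P; cases Q; elim disjE; simp)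
qed

context oriented_group_involution
begin

definition normal_pair :: "'a \<Rightarrow> 'a \<Rightarrow> bool" where
  "normal_pair g h \<longleftrightarrow> g \<otimes> h = h \<otimes> g \<or>
     (\<sigma> g = \<sigma> h \<and> g \<otimes> h = st g \<otimes> st h \<and> h \<otimes> g = st h \<otimes> st g) \<or>
     (\<sigma> g \<noteq> \<sigma> h \<and> st (g \<otimes> h) = g \<otimes> h \<and> st (h \<otimes> g) = h \<otimes> g)"

lemma oriented_inv_st [simp]: "h \<in> carrier G \<Longrightarrow> oriented_inv G st \<sigma> \<alpha> (st h) = of_int (\<sigma> h) * \<alpha> h"
  unfolding oriented_inv_def by simp

lemma supp_oriented_inv:
  fixes \<alpha> :: "'a \<Rightarrow> 'f::field"
  assumes \<alpha>: "\<alpha> \<in> group_algebra G"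
  shows "supp (oriented_inv G st \<sigma> \<alpha>) = st ` supp \<alpha>"
proof -
  have sub: "supp \<alpha> \<subseteq> carrier G" using group_algebra_supp(2)[OF \<alpha>] .
  have nonzero: "of_int (\<sigma> g) \<noteq> (0::'f)" if "g \<in> carrier G" for g
    using \<sigma>_cases[OF that] by auto
  show ?thesis
  proof (rule subset_antisym; rule subsetI)
    fix y assume "y \<in> supp (oriented_inv G st \<sigma> \<alpha>)"
    then have "y \<in> carrier G" "st y \<in> supp \<alpha>" by (auto simp: supp_def oriented_inv_def split: if_splits)
    then show "y \<in> st ` supp \<alpha>" by (intro image_eqI[of y st "st y"]) auto
  next
    fix y assume "y \<in> st ` supp \<alpha>"
    then obtain h where "h \<in> supp \<alpha>" "y = st h" by blast
    then show "y \<in> supp (oriented_inv G st \<sigma> \<alpha>)" using sub nonzero by (auto simp: supp_def)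
  qed
qed

lemma oriented_inv_closed:
  fixes \<alpha> :: "'a \<Rightarrow> 'f::field"
  assumes \<alpha>: "\<alpha> \<in> group_algebra G"
  shows "oriented_inv G st \<sigma> \<alpha> \<in> group_algebra G"
  using supp_oriented_inv[OF \<alpha>] group_algebra_supp(1)[OF \<alpha>]
  unfolding group_algebra_def supp_def by (simp add: oriented_inv_def)

lemma inj_on_st: "A \<subseteq> carrier G \<Longrightarrow> inj_on st A"
  by (rule inj_onI) (metis st_st subsetD)

lemma coeff_mult_oriented_inv_right:
  fixes \<alpha> :: "'a \<Rightarrow> 'f::field"
  assumes \<alpha>: "\<alpha> \<in> group_algebra G" and x: "x \<in> carrier G"
  shows "ga_mult G \<alpha> (oriented_inv G st \<sigma> \<alpha>) x =
    (\<Sum>g\<in>supp \<alpha>. \<Sum>h\<in>supp \<alpha>. \<alpha> g * \<alpha> h * of_int (\<sigma> h) * of_bool (g \<otimes> st h = x))"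
proof -
  have sub: "supp \<alpha> \<subseteq> carrier G" using group_algebra_supp(2)[OF \<alpha>] .
  have "ga_mult G \<alpha> (oriented_inv G st \<sigma> \<alpha>) x =
      (\<Sum>g\<in>supp \<alpha>. \<Sum>y\<in>st ` supp \<alpha>. \<alpha> g * oriented_inv G st \<sigma> \<alpha> y * of_bool (g \<otimes> y = x))"
    unfolding ga_mult_eq_double_sum[OF \<alpha> oriented_inv_closed[OF \<alpha>] x] supp_oriented_inv[OF \<alpha>] ..
  also have "\<dots> = (\<Sum>g\<in>supp \<alpha>. \<Sum>h\<in>supp \<alpha>. \<alpha> g * oriented_inv G st \<sigma> \<alpha> (st h) * of_bool (g \<otimes> st h = x))"
    by (simp only: sum.reindex[OF inj_on_st[OF sub]] comp_def)
  also have "\<dots> = (\<Sum>g\<in>supp \<alpha>. \<Sum>h\<in>supp \<alpha>. \<alpha> g * \<alpha> h * of_int (\<sigma> h) * of_bool (g \<otimes> st h = x))"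
  proof (intro sum.cong refl)
    fix g h assume "h \<in> supp \<alpha>"
    then have "oriented_inv G st \<sigma> \<alpha> (st h) = of_int (\<sigma> h) * \<alpha> h" using sub by auto
    then show "\<alpha> g * oriented_inv G st \<sigma> \<alpha> (st h) * of_bool (g \<otimes> st h = x) =
        \<alpha> g * \<alpha> h * of_int (\<sigma> h) * of_bool (g \<otimes> st h = x)"
      by (simp add: mult_ac)
  qed
  finally show ?thesis .
qed

lemma coeff_mult_oriented_inv_left:
  fixes \<alpha> :: "'a \<Rightarrow> 'f::field"
  assumes \<alpha>: "\<alpha> \<in> group_algebra G" and x: "x \<in> carrier G"
  shows "ga_mult G (oriented_inv G st \<sigma> \<alpha>) \<alpha> x =
    (\<Sum>g\<in>supp \<alpha>. \<Sum>h\<in>supp \<alpha>. \<alpha> g * \<alpha> h * of_int (\<sigma> h) * of_bool (st h \<otimes> g = x))"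
proof -
  have sub: "supp \<alpha> \<subseteq> carrier G" using group_algebra_supp(2)[OF \<alpha>] .
  have "ga_mult G (oriented_inv G st \<sigma> \<alpha>) \<alpha> x =
      (\<Sum>y\<in>st ` supp \<alpha>. \<Sum>g\<in>supp \<alpha>. oriented_inv G st \<sigma> \<alpha> y * \<alpha> g * of_bool (y \<otimes> g = x))"
    unfolding ga_mult_eq_double_sum[OF oriented_inv_closed[OF \<alpha>] \<alpha> x] supp_oriented_inv[OF \<alpha>] ..
  also have "\<dots> = (\<Sum>h\<in>supp \<alpha>. \<Sum>g\<in>supp \<alpha>. oriented_inv G st \<sigma> \<alpha> (st h) * \<alpha> g * of_bool (st h \<otimes> g = x))"
    by (simp only: sum.reindex[OF inj_on_st[OF sub]] comp_def)
  also have "\<dots> = (\<Sum>h\<in>supp \<alpha>. \<Sum>g\<in>supp \<alpha>. \<alpha> g * \<alpha> h * of_int (\<sigma> h) * of_bool (st h \<otimes> g = x))"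
  proof (intro sum.cong refl)
    fix h g assume "h \<in> supp \<alpha>"
    then have "oriented_inv G st \<sigma> \<alpha> (st h) = of_int (\<sigma> h) * \<alpha> h" using sub by auto
    then show "oriented_inv G st \<sigma> \<alpha> (st h) * \<alpha> g * of_bool (st h \<otimes> g = x) =
        \<alpha> g * \<alpha> h * of_int (\<sigma> h) * of_bool (st h \<otimes> g = x)"
      by (simp add: mult_ac)
  qed
  also have "\<dots> = (\<Sum>g\<in>supp \<alpha>. \<Sum>h\<in>supp \<alpha>. \<alpha> g * \<alpha> h * of_int (\<sigma> h) * of_bool (st h \<otimes> g = x))"
    by (rule sum.swap)
  finally show ?thesis .
qed

lemma ga_normal_iff_coeffs:
  "ga_normal G st \<sigma> (group_algebra G :: ('a \<Rightarrow> 'f::field) set) \<longleftrightarrow>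
    (\<forall>\<alpha> \<in> (group_algebra G :: ('a \<Rightarrow> 'f) set). \<forall>x \<in> carrier G.
      ga_mult G \<alpha> (oriented_inv G st \<sigma> \<alpha>) x = ga_mult G (oriented_inv G st \<sigma> \<alpha>) \<alpha> x)"
  unfolding ga_normal_def fun_eq_iff by (metis ga_mult_outside_carrier)

lemma normal_pair_coeff_identity:
  assumes g: "g \<in> carrier G" and h: "h \<in> carrier G" and pair: "normal_pair g (st h)"
  shows "of_int (\<sigma> h) * of_bool (g \<otimes> st h = x) + of_int (\<sigma> g) * of_bool (h \<otimes> st g = x) =
    of_int (\<sigma> h) * of_bool (st h \<otimes> g = x) + (of_int (\<sigma> g) * of_bool (st g \<otimes> h = x) :: 'f::ring_1)"
proof -
  define k where "k = st h"
  have k: "k \<in> carrier G" "h = st k" "\<sigma> k = \<sigma> h" using h unfolding k_def by auto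
  have st_gk: "st (g \<otimes> k) = h \<otimes> st g" and st_kg: "st (k \<otimes> g) = st g \<otimes> h"
    using st_mult g k by auto
  consider "g \<otimes> k = k \<otimes> g"
    | "\<sigma> g = \<sigma> h" "g \<otimes> k = st g \<otimes> h" "k \<otimes> g = h \<otimes> st g"
    | "\<sigma> g \<noteq> \<sigma> h" "h \<otimes> st g = g \<otimes> k" "st g \<otimes> h = k \<otimes> g"
    using pair k st_gk st_kg unfolding normal_pair_def k_def by auto
  then show ?thesis
  proof cases
    case 1
    then show ?thesis using st_gk st_kg by (simp add: k_def)
  next
    case 2
    then show ?thesis by (simp add: k_def algebra_simps)
  next
    case 3
    then have "\<sigma> g = - \<sigma> h" using \<sigma>_cases[OF g] \<sigma>_cases[OF h] by auto
    with 3 show ?thesis by (simp add: k_def algebra_simps)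
  qed
qed

lemma ga_normal_if_normal_pairs:
  assumes two: "(2::'f::field) \<noteq> 0"
    and pairs: "\<forall>g \<in> carrier G. \<forall>h \<in> carrier G. normal_pair g h"
  shows "ga_normal G st \<sigma> (group_algebra G :: ('a \<Rightarrow> 'f) set)"
  unfolding ga_normal_iff_coeffs
proof (intro ballI)
  fix \<alpha> :: "'a \<Rightarrow> 'f" and x
  assume \<alpha>: "\<alpha> \<in> group_algebra G" and x: "x \<in> carrier G"
  have "(\<Sum>g\<in>supp \<alpha>. \<Sum>h\<in>supp \<alpha>. \<alpha> g * \<alpha> h * of_int (\<sigma> h) * of_bool (g \<otimes> st h = x)) =
        (\<Sum>g\<in>supp \<alpha>. \<Sum>h\<in>supp \<alpha>. \<alpha> g * \<alpha> h * of_int (\<sigma> h) * of_bool (st h \<otimes> g = x))"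
  proof (rule double_sum_eq_if_symmetric_parts_eq[OF two])
    fix g h assume "g \<in> supp \<alpha>" "h \<in> supp \<alpha>"
    then have g: "g \<in> carrier G" and h: "h \<in> carrier G" using group_algebra_supp(2)[OF \<alpha>] by auto
    have "normal_pair g (st h)" using pairs g h by simp
    note identity = normal_pair_coeff_identity[OF g h this, of x]
    have "\<alpha> g * \<alpha> h * (of_int (\<sigma> h) * of_bool (g \<otimes> st h = x) + of_int (\<sigma> g) * of_bool (h \<otimes> st g = x)) =
      \<alpha> g * \<alpha> h * (of_int (\<sigma> h) * of_bool (st h \<otimes> g = x) + of_int (\<sigma> g) * of_bool (st g \<otimes> h = x))"
      by (simp only: identity)
    then show "\<alpha> g * \<alpha> h * of_int (\<sigma> h) * of_bool (g \<otimes> st h = x) +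
        \<alpha> h * \<alpha> g * of_int (\<sigma> g) * of_bool (h \<otimes> st g = x) =
      \<alpha> g * \<alpha> h * of_int (\<sigma> h) * of_bool (st h \<otimes> g = x) +
        \<alpha> h * \<alpha> g * of_int (\<sigma> g) * of_bool (st g \<otimes> h = x)"
      by (simp add: algebra_simps)
  qed
  then show "ga_mult G \<alpha> (oriented_inv G st \<sigma> \<alpha>) x = ga_mult G (oriented_inv G st \<sigma> \<alpha>) \<alpha> x"
    by (simp add: coeff_mult_oriented_inv_right[OF \<alpha> x] coeff_mult_oriented_inv_left[OF \<alpha> x])
qed

lemma ga_normal_indicator_sums:
  assumes normal: "ga_normal G st \<sigma> (group_algebra G :: ('a \<Rightarrow> 'f::field) set)"
    and A: "finite A" "A \<subseteq> carrier G" and x: "x \<in> carrier G"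
  shows "(\<Sum>g\<in>A. \<Sum>h\<in>A. of_int (\<sigma> h) * of_bool (g \<otimes> st h = x)) =
    (\<Sum>g\<in>A. \<Sum>h\<in>A. of_int (\<sigma> h) * (of_bool (st h \<otimes> g = x) :: 'f))"
proof -
  define \<alpha> :: "'a \<Rightarrow> 'f" where "\<alpha> y = of_bool (y \<in> A)" for y
  have supp: "supp \<alpha> = A" by (auto simp: supp_def \<alpha>_def)
  have \<alpha>: "\<alpha> \<in> group_algebra G" using A by (auto simp: group_algebra_def \<alpha>_def)
  have "(\<Sum>g\<in>A. \<Sum>h\<in>A. of_int (\<sigma> h) * of_bool (g \<otimes> st h = x)) =
      ga_mult G \<alpha> (oriented_inv G st \<sigma> \<alpha>) x"
    unfolding coeff_mult_oriented_inv_right[OF \<alpha> x] supp by (intro sum.cong refl) (simp add: \<alpha>_def)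
  also have "\<dots> = ga_mult G (oriented_inv G st \<sigma> \<alpha>) \<alpha> x"
    using normal \<alpha> x by (simp add: ga_normal_iff_coeffs)
  also have "\<dots> = (\<Sum>g\<in>A. \<Sum>h\<in>A. of_int (\<sigma> h) * of_bool (st h \<otimes> g = x))"
    unfolding coeff_mult_oriented_inv_left[OF \<alpha> x] supp by (intro sum.cong refl) (simp add: \<alpha>_def)
  finally show ?thesis .
qed

lemma ga_normal_imp_commute_st:
  assumes normal: "ga_normal G st \<sigma> (group_algebra G :: ('a \<Rightarrow> 'f::field) set)"
    and u: "u \<in> carrier G"
  shows "u \<otimes> st u = st u \<otimes> u"
proof -
  have "(of_int (\<sigma> u) :: 'f) = of_int (\<sigma> u) * of_bool (st u \<otimes> u = u \<otimes> st u)"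
    using ga_normal_indicator_sums[OF normal, of "{u}" "u \<otimes> st u"] u by (simp del: sum_mult_of_bool_eq)
  moreover have "(of_int (\<sigma> u) :: 'f) \<noteq> 0" using \<sigma>_cases[OF u] by auto
  ultimately show ?thesis by (cases "st u \<otimes> u = u \<otimes> st u") auto
qed

lemma ga_normal_pair_identity:
  assumes normal: "ga_normal G st \<sigma> (group_algebra G :: ('a \<Rightarrow> 'f::field) set)"
    and g: "g \<in> carrier G" and h: "h \<in> carrier G" and g_neq: "g \<noteq> st h" and x: "x \<in> carrier G"
  shows "of_int (\<sigma> h) * of_bool (g \<otimes> h = x) + of_int (\<sigma> g) * of_bool (st h \<otimes> st g = x) =
    of_int (\<sigma> h) * of_bool (h \<otimes> g = x) + (of_int (\<sigma> g) * of_bool (st g \<otimes> st h = x) :: 'f)"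
proof -
  have pair_sum: "(\<Sum>u\<in>{g, st h}. \<Sum>v\<in>{g, st h}. K u v) =
      K g g + (K g (st h) + K (st h) g) + K (st h) (st h)" for K :: "'a \<Rightarrow> 'a \<Rightarrow> 'f"
    using g_neq by (simp add: add.assoc)
  have "finite {g, st h}" "{g, st h} \<subseteq> carrier G" using g h by auto
  from ga_normal_indicator_sums[OF normal this x]
  have "of_int (\<sigma> g) * of_bool (g \<otimes> st g = x) +
      (of_int (\<sigma> h) * of_bool (g \<otimes> h = x) + of_int (\<sigma> g) * of_bool (st h \<otimes> st g = x)) +
      of_int (\<sigma> h) * of_bool (st h \<otimes> h = x) =
    of_int (\<sigma> g) * of_bool (st g \<otimes> g = x) +
      (of_int (\<sigma> h) * of_bool (h \<otimes> g = x) + of_int (\<sigma> g) * of_bool (st g \<otimes> st h = x)) +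
      (of_int (\<sigma> h) * of_bool (h \<otimes> st h = x) :: 'f)"
    unfolding pair_sum using h by simp
  then show ?thesis
    unfolding ga_normal_imp_commute_st[OF normal g] ga_normal_imp_commute_st[OF normal h]
    by (simp only: add_left_cancel add_right_cancel)
qed

lemma ga_normal_imp_normal_pair:
  assumes two: "(2::'f::field) \<noteq> 0"
    and normal: "ga_normal G st \<sigma> (group_algebra G :: ('a \<Rightarrow> 'f) set)"
    and g: "g \<in> carrier G" and h: "h \<in> carrier G"
  shows "normal_pair g h"
proof (cases "g \<otimes> h = h \<otimes> g")
  case True
  then show ?thesis by (simp add: normal_pair_def)
next
  case noncomm: False
  then have "g \<noteq> st h" using ga_normal_imp_commute_st[OF normal h] h by auto
  note identity = ga_normal_pair_identity[OF normal g h this]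
  have "of_int (\<sigma> h) + of_int (\<sigma> g) * of_bool (st h \<otimes> st g = g \<otimes> h) =
      (of_int (\<sigma> g) * of_bool (st g \<otimes> st h = g \<otimes> h) :: 'f)"
    using identity[of "g \<otimes> h"] noncomm g h by (simp add: eq_commute[of "h \<otimes> g"])
  then have gh: "if \<sigma> g = \<sigma> h then st g \<otimes> st h = g \<otimes> h else st h \<otimes> st g = g \<otimes> h"
    by (rule sign_indicator_eq_cases[OF two \<sigma>_cases[OF g] \<sigma>_cases[OF h]])
  have "of_int (\<sigma> h) + of_int (\<sigma> g) * of_bool (st g \<otimes> st h = h \<otimes> g) =
      (of_int (\<sigma> g) * of_bool (st h \<otimes> st g = h \<otimes> g) :: 'f)"
    using identity[of "h \<otimes> g"] noncomm g h by simp
  then have hg: "if \<sigma> g = \<sigma> h then st h \<otimes> st g = h \<otimes> g else st g \<otimes> st h = h \<otimes> g"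
    by (rule sign_indicator_eq_cases[OF two \<sigma>_cases[OF g] \<sigma>_cases[OF h]])
  from gh hg show ?thesis using g h by (auto simp: normal_pair_def st_mult split: if_splits)
qed

lemma ga_normal_iff_normal_pairs:
  assumes "(2::'f::field) \<noteq> 0"
  shows "ga_normal G st \<sigma> (group_algebra G :: ('a \<Rightarrow> 'f) set) \<longleftrightarrow>
    (\<forall>g \<in> carrier G. \<forall>h \<in> carrier G. normal_pair g h)"
  using ga_normal_if_normal_pairs ga_normal_imp_normal_pair assms by blast

end

section \<open>Sufficiency of the conditions\<close>

lemma (in group) unique_commutator_central:
  assumes s: "s \<noteq> \<one>" and comms: "commutators G = {\<one>, s}"
  shows "s \<in> grp_center G (carrier G)"
proof -
  have "s \<in> commutators G" using comms by simp
  then have s_carrier: "s \<in> carrier G" unfolding commutators_def using commutator_closed by blast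
  have "x \<otimes> s = s \<otimes> x" if x: "x \<in> carrier G" for x
  proof -
    have "commutator G x s \<in> commutators G" unfolding commutators_def using x s_carrier by blast
    then have "commutator G x s \<in> {\<one>, s}" by (simp only: comms)
    moreover have "commutator G x s \<noteq> s" using commutator_eq_right_imp_one x s_carrier s by blast
    ultimately show ?thesis using commutator_eq_one_iff x s_carrier by blast
  qed
  then show ?thesis unfolding grp_center_def using s_carrier by auto
qed

lemma (in group) unique_commutator_square:
  assumes s: "s \<noteq> \<one>" and comms: "commutators G = {\<one>, s}"
  shows "s \<otimes> s = \<one>"
proof -
  have "s \<in> commutators G" using comms by simp
  then obtain a b where ab: "a \<in> carrier G" "b \<in> carrier G" "s = commutator G a b"
    unfolding commutators_def by blast
  have "inv s = commutator G b a" using commutator_swap[of a b] ab by simp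
  then have "inv s \<in> commutators G" unfolding commutators_def using ab by blast
  then have "inv s \<in> {\<one>, s}" by (simp only: comms)
  moreover have "inv s \<noteq> \<one>" using s ab commutator_closed by simp
  ultimately have "inv s = s" by simp
  then show ?thesis using ab commutator_closed r_inv[of s] by simp
qed

context oriented_group_involution
begin

definition abelian_kernel_conditions :: bool where
  "abelian_kernel_conditions \<longleftrightarrow> abelian_on G N \<and> (\<forall>a \<in> carrier G - N. st a = a) \<and>
     (\<forall>n \<in> N. \<forall>a \<in> carrier G - N. st n = inv a \<otimes> n \<otimes> a \<and> st n = a \<otimes> n \<otimes> inv a)"

definition LC_conditions :: bool where
  "LC_conditions \<longleftrightarrow> LC_group G N \<and> LC_group G (carrier G) \<and>
     (\<exists>s. s \<noteq> \<one> \<and> commutators G = {\<one>, s} \<and>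
       (\<exists>g0 \<in> (carrier G - N) \<inter> grp_center G (carrier G). st g0 = s \<otimes> g0) \<and>
       (\<forall>g \<in> carrier G. st g =
          (if g \<in> N \<inter> grp_center G (carrier G) \<or> g \<in> (carrier G - N) - grp_center G (carrier G)
           then g else s \<otimes> g)))"

lemma normal_pair_sym: "normal_pair g h \<longleftrightarrow> normal_pair h g"
  unfolding normal_pair_def by auto

lemma normal_pairs_if_abelian_kernel_conditions:
  assumes abelian_kernel_conditions
  shows "\<forall>g \<in> carrier G. \<forall>h \<in> carrier G. normal_pair g h"
proof -
  have ab: "abelian_on G N" and fix_outside: "\<And>a. a \<in> carrier G - N \<Longrightarrow> st a = a"
    and conj: "\<And>n a. n \<in> N \<Longrightarrow> a \<in> carrier G - N \<Longrightarrow> st n = inv a \<otimes> n \<otimes> a \<and> st n = a \<otimes> n \<otimes> inv a"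
    using assms unfolding abelian_kernel_conditions_def by blast+
  have mixed: "normal_pair n a" if n: "n \<in> N" and a: "a \<in> carrier G - N" for n a
  proof -
    have nc: "n \<in> carrier G" using n N_carrier by blast
    have "\<sigma> n \<noteq> \<sigma> a" using n a by (simp add: mem_N_iff not_in_N_iff)
    moreover have "st (n \<otimes> a) = n \<otimes> a"
      using st_mult[of n a] fix_outside[OF a] conj[OF n a, THEN conjunct1] nc a by (simp add: m_assoc)
    moreover have "st (a \<otimes> n) = a \<otimes> n"
      using st_mult[of a n] fix_outside[OF a] conj[OF n a, THEN conjunct2] nc a by (simp add: m_assoc)
    ultimately show ?thesis unfolding normal_pair_def by blast
  qed
  show ?thesis
  proof (intro ballI)
    fix g h assume g: "g \<in> carrier G" and h: "h \<in> carrier G"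
    consider "g \<in> N" "h \<in> N" | "g \<in> N" "h \<notin> N" | "g \<notin> N" "h \<in> N" | "g \<notin> N" "h \<notin> N"
      by blast
    then show "normal_pair g h"
    proof cases
      case 1
      then show ?thesis using ab unfolding abelian_on_def normal_pair_def by blast
    next
      case 2
      then show ?thesis using mixed h by blast
    next
      case 3
      then show ?thesis using mixed g normal_pair_sym by blast
    next
      case 4
      then show ?thesis using fix_outside g h by (simp add: normal_pair_def not_in_N_iff)
    qed
  qed
qed

lemma normal_pairs_if_st_noncentral:
  assumes s_central: "s \<in> grp_center G (carrier G)" and s_square: "s \<otimes> s = \<one>"
    and st_noncentral: "\<And>x. x \<in> carrier G \<Longrightarrow> x \<notin> grp_center G (carrier G) \<Longrightarrow>
      st x = (if x \<in> N then s \<otimes> x else x)"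
  shows "\<forall>g \<in> carrier G. \<forall>h \<in> carrier G. normal_pair g h"
proof (intro ballI)
  fix g h assume g: "g \<in> carrier G" and h: "h \<in> carrier G"
  show "normal_pair g h"
  proof (cases "g \<otimes> h = h \<otimes> g")
    case True
    then show ?thesis unfolding normal_pair_def by simp
  next
    case noncomm: False
    then have noncentral: "g \<notin> grp_center G (carrier G)" "h \<notin> grp_center G (carrier G)"
        "g \<otimes> h \<notin> grp_center G (carrier G)" "h \<otimes> g \<notin> grp_center G (carrier G)"
      using center_commute commute_if_mult_central g h by metis+
    consider "g \<in> N" "h \<in> N" | "g \<notin> N" "h \<notin> N" | "\<sigma> g \<noteq> \<sigma> h"
      using g h \<sigma>_cases[of g] \<sigma>_cases[of h] by (fastforce simp: mem_N_iff)
    then show ?thesis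
    proof cases
      case 1
      have "st g \<otimes> st h = g \<otimes> h" "st h \<otimes> st g = h \<otimes> g"
        using 1 g h noncentral st_noncentral central_square_mult_cancel[OF s_central s_square] by simp_all
      then show ?thesis using 1 unfolding normal_pair_def by (simp add: mem_N_iff)
    next
      case 2
      then have "st g = g" "st h = h" using g h noncentral st_noncentral by simp_all
      then show ?thesis using 2 g h by (simp add: normal_pair_def not_in_N_iff)
    next
      case 3
      then have "g \<in> N \<longleftrightarrow> h \<notin> N" using g h \<sigma>_cases[of g] \<sigma>_cases[of h] by (auto simp: mem_N_iff)
      then have "g \<otimes> h \<notin> N" "h \<otimes> g \<notin> N" using g h by (auto simp: mult_in_N_iff)
      then show ?thesis using 3 g h noncentral st_noncentral unfolding normal_pair_def by simp
    qed
  qed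
qed

lemma normal_pairs_if_LC_conditions:
  assumes LC_conditions
  shows "\<forall>g \<in> carrier G. \<forall>h \<in> carrier G. normal_pair g h"
proof -
  obtain s where s: "s \<noteq> \<one>" "commutators G = {\<one>, s}"
    and st_eq: "\<And>g. g \<in> carrier G \<Longrightarrow> st g =
      (if g \<in> N \<inter> grp_center G (carrier G) \<or> g \<in> (carrier G - N) - grp_center G (carrier G)
       then g else s \<otimes> g)"
    using assms unfolding LC_conditions_def by blast
  show ?thesis
  proof (rule normal_pairs_if_st_noncentral)
    show "s \<in> grp_center G (carrier G)" "s \<otimes> s = \<one>"
      using unique_commutator_central[OF s] unique_commutator_square[OF s] .
    show "st x = (if x \<in> N then s \<otimes> x else x)"
      if "x \<in> carrier G" "x \<notin> grp_center G (carrier G)" for x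
      using st_eq that by auto
  qed
qed

end

section \<open>Necessity of the conditions: abelian kernel\<close>

locale normal_oriented_involution = oriented_group_involution +
  assumes normal_pairs: "\<forall>g \<in> carrier G. \<forall>h \<in> carrier G. normal_pair g h"
begin

lemma commute_st:
  assumes g: "g \<in> carrier G" shows "g \<otimes> st g = st g \<otimes> g"
proof -
  have "normal_pair g (st g)" using normal_pairs g by simp
  then show ?thesis using g unfolding normal_pair_def by auto
qed

lemma noncommuting_in_N_st:
  assumes g: "g \<in> N" and h: "h \<in> N" and noncomm: "g \<otimes> h \<noteq> h \<otimes> g"
  shows "g \<otimes> h = st g \<otimes> st h"
proof -
  have "normal_pair g h" using normal_pairs g h N_carrier by blast
  then show ?thesis using g h noncomm unfolding normal_pair_def by (auto simp: mem_N_iff)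
qed

lemma noncommuting_outside_N_st:
  assumes a: "a \<in> carrier G" "a \<notin> N" and n: "n \<in> N" and noncomm: "a \<otimes> n \<noteq> n \<otimes> a"
  shows "st a = a" "st n = a \<otimes> n \<otimes> inv a" "st n = inv a \<otimes> n \<otimes> a"
proof -
  have nc: "n \<in> carrier G" using n N_carrier by blast
  have \<sigma>_an: "\<sigma> a \<noteq> \<sigma> n" "\<sigma> (a \<otimes> n) = \<sigma> a" using a n by (simp_all add: mem_N_iff not_in_N_iff)
  have st_an: "st (a \<otimes> n) = a \<otimes> n" and st_na: "st (n \<otimes> a) = n \<otimes> a"
    using normal_pairs a nc noncomm \<sigma>_an unfolding normal_pair_def by auto
  have "a \<otimes> (a \<otimes> n) \<noteq> a \<otimes> n \<otimes> a" using commute_mult_self_iff[of a n] a nc noncomm by simp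
  then have "a \<otimes> (a \<otimes> n) = st a \<otimes> st (a \<otimes> n)"
    using normal_pairs a nc \<sigma>_an unfolding normal_pair_def by (metis m_closed)
  then show st_a: "st a = a" using a nc st_an by simp
  have "st n \<otimes> a = a \<otimes> n" using st_an st_a st_mult[of a n] a nc by simp
  then show "st n = a \<otimes> n \<otimes> inv a" using mult_eq_mult_iff_right_conj[of a n "st n"] a nc by simp
  have "a \<otimes> st n = n \<otimes> a" using st_na st_a st_mult[of n a] a nc by simp
  then show "st n = inv a \<otimes> n \<otimes> a" using mult_eq_mult_iff_left_conj[of a "st n" n] a nc by simp
qed

lemma exists_noncommuting_in_N:
  assumes nonab: "\<not> abelian_on G (carrier G)" and ab: "abelian_on G N" and a: "a \<in> carrier G - N"
  shows "\<exists>n \<in> N. a \<otimes> n \<noteq> n \<otimes> a"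
  using central_if_commute_N abelian_if_central_outside_N a ab nonab by blast

lemma st_commuting_in_N:
  assumes nonab: "\<not> abelian_on G (carrier G)" and ab: "abelian_on G N"
    and a: "a \<in> carrier G" "a \<notin> N" and n: "n \<in> N" and comm: "a \<otimes> n = n \<otimes> a"
  shows "st n = n"
proof -
  have nc: "n \<in> carrier G" using n N_carrier by blast
  obtain m where m: "m \<in> N" "a \<otimes> m \<noteq> m \<otimes> a"
    using exists_noncommuting_in_N[OF nonab ab] a by blast
  have mc: "m \<in> carrier G" using m N_carrier by blast
  have nm: "n \<otimes> m \<in> N" using n m nc mc by (simp add: mult_in_N_iff)
  have "a \<otimes> (n \<otimes> m) \<noteq> n \<otimes> m \<otimes> a"
    using commute_mult_cancel_left[of n m a] comm m(2) mc nc a by auto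
  then have "st (n \<otimes> m) = inv a \<otimes> (n \<otimes> m) \<otimes> a"
    using noncommuting_outside_N_st(3) a nm by blast
  also have "\<dots> = n \<otimes> (inv a \<otimes> m \<otimes> a)"
    using commute_inv_left[of a n] comm a nc mc by (simp add: m_assoc [symmetric])
  also have "\<dots> = n \<otimes> st m" using noncommuting_outside_N_st(3) a m by simp
  finally have "st (n \<otimes> m) = n \<otimes> st m" .
  moreover have "st (n \<otimes> m) = st n \<otimes> st m"
    using st_mult[of n m] ab n m nc mc st_in_N_iff unfolding abelian_on_def by simp
  ultimately show ?thesis using nc mc by simp
qed

lemma abelian_kernel_conditions_if_abelian_N:
  assumes nonab: "\<not> abelian_on G (carrier G)" and ab: "abelian_on G N"
  shows abelian_kernel_conditions
proof -
  have st_outside: "st a = a" if a: "a \<in> carrier G - N" for a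
  proof -
    obtain n where "n \<in> N" "a \<otimes> n \<noteq> n \<otimes> a" using exists_noncommuting_in_N[OF nonab ab a] by blast
    then show "st a = a" using noncommuting_outside_N_st(1) a by blast
  qed
  have st_N: "st n = inv a \<otimes> n \<otimes> a \<and> st n = a \<otimes> n \<otimes> inv a"
    if n: "n \<in> N" and a: "a \<in> carrier G - N" for n a
  proof (cases "a \<otimes> n = n \<otimes> a")
    case True
    then show ?thesis
      using st_commuting_in_N[OF nonab ab _ _ n] a n N_carrier
        mult_eq_mult_iff_right_conj[of a n n] mult_eq_mult_iff_left_conj[of a n n] by auto
  next
    case False
    then show ?thesis using noncommuting_outside_N_st(2,3) a n by blast
  qed
  show ?thesis unfolding abelian_kernel_conditions_def using ab st_outside st_N by blast
qed

end

section \<open>Necessity of the conditions: non-abelian kernel\<close>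

locale nonabelian_kernel = normal_oriented_involution +
  assumes N_nonabelian: "\<not> abelian_on G N"
begin

abbreviation Z where "Z \<equiv> grp_center G (carrier G)"
abbreviation Z_N where "Z_N \<equiv> grp_center G N"

lemma not_in_Z_N_iff: "g \<in> N \<Longrightarrow> g \<notin> Z_N \<longleftrightarrow> (\<exists>h \<in> N. g \<otimes> h \<noteq> h \<otimes> g)"
  unfolding grp_center_iff by blast

lemma noncommuting_not_in_Z_N:
  "g \<in> N \<Longrightarrow> h \<in> N \<Longrightarrow> g \<otimes> h \<noteq> h \<otimes> g \<Longrightarrow> g \<notin> Z_N \<and> h \<notin> Z_N \<and> g \<otimes> h \<notin> Z_N"
  using commute_mult_self_iff[of g h] N_carrier mult_in_N_iff[of g h]
  unfolding grp_center_iff by metis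

definition defect :: "'a \<Rightarrow> 'a" where
  "defect g = inv g \<otimes> st g"

lemma inv_st_mult_eq_defect:
  assumes g: "g \<in> N" and h: "h \<in> N" and noncomm: "g \<otimes> h \<noteq> h \<otimes> g"
  shows "inv (st g) \<otimes> g = defect h"
proof -
  have gc: "g \<in> carrier G" and hc: "h \<in> carrier G" using g h N_carrier by auto
  have "st h = inv (st g) \<otimes> (g \<otimes> h)"
    using inv_solve_left[of "st h" "st g" "g \<otimes> h"] noncommuting_in_N_st[OF g h noncomm] gc hc by simp
  then have "st h \<otimes> inv h = inv (st g) \<otimes> g" using gc hc by (simp add: m_assoc)
  moreover have "inv h \<otimes> st h = st h \<otimes> inv h" using commute_inv_left[of h "st h"] commute_st[OF hc] hc by simp
  ultimately show ?thesis unfolding defect_def by simp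
qed

lemma noncommuting_defect:
  assumes g: "g \<in> N" and h: "h \<in> N" and noncomm: "g \<otimes> h \<noteq> h \<otimes> g"
  shows "defect g = defect h" "inv (defect g) = defect g"
proof -
  have gc: "g \<in> carrier G" and hc: "h \<in> carrier G" using g h N_carrier by auto
  have "inv g \<otimes> h \<noteq> h \<otimes> inv g" using commute_inv_left[of "inv g" h] gc hc noncomm by auto
  then have "inv (st (inv g)) \<otimes> inv g = defect h"
    using inv_st_mult_eq_defect[of "inv g" h] g h gc by (simp add: inv_in_N_iff)
  then have "st g \<otimes> inv g = defect h" using gc by (simp add: st_inv)
  moreover have "inv g \<otimes> st g = st g \<otimes> inv g" using commute_inv_left[of g "st g"] commute_st[OF gc] gc by simp
  ultimately show defect_eq: "defect g = defect h" unfolding defect_def by simp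
  have "inv (defect g) = inv (st g) \<otimes> g" unfolding defect_def using gc by (simp add: inv_mult_group)
  then show "inv (defect g) = defect g" using inv_st_mult_eq_defect[OF g h noncomm] defect_eq by simp
qed

lemma defect_eq_if_noncentral:
  assumes g: "g \<in> N" "g \<notin> Z_N" and x: "x \<in> N" "x \<notin> Z_N"
  shows "defect g = defect x"
proof -
  obtain u where u: "u \<in> N" "g \<otimes> u \<noteq> u \<otimes> g" using not_in_Z_N_iff g by blast
  obtain v where v: "v \<in> N" "x \<otimes> v \<noteq> v \<otimes> x" using not_in_Z_N_iff x by blast
  have carrier: "g \<in> carrier G" "x \<in> carrier G" "u \<in> carrier G" "v \<in> carrier G"
    using g x u v N_carrier by auto
  consider "x \<otimes> u \<noteq> u \<otimes> x" | "g \<otimes> v \<noteq> v \<otimes> g" | "x \<otimes> u = u \<otimes> x" "g \<otimes> v = v \<otimes> g"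
    by blast
  then show ?thesis
  proof cases
    case 1
    then show ?thesis using noncommuting_defect(1) g x u by metis
  next
    case 2
    then show ?thesis using noncommuting_defect(1) g x v by metis
  next
    case 3
    have uv: "u \<otimes> v \<in> N" using u v carrier by (simp add: mult_in_N_iff)
    have "g \<otimes> (u \<otimes> v) \<noteq> u \<otimes> v \<otimes> g" using commute_mult_cancel_right[of u v g] 3 u carrier by auto
    moreover have "x \<otimes> (u \<otimes> v) \<noteq> u \<otimes> v \<otimes> x" using commute_mult_cancel_left[of u v x] 3 v carrier by auto
    ultimately show ?thesis using noncommuting_defect(1) g x uv by metis
  qed
qed

text \<open>By \<open>defect_eq_if_noncentral\<close> this is the common value of \<open>defect\<close> on the non-central
  elements of \<open>N\<close>; it will turn out to be the unique non-identity commutator of \<open>G\<close>.\<close>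

definition s :: 'a where
  "s = defect (SOME g. g \<in> N \<and> g \<notin> Z_N)"

lemma exists_noncommuting_pair_in_N: "\<exists>g \<in> N. \<exists>h \<in> N. g \<otimes> h \<noteq> h \<otimes> g"
  using N_nonabelian unfolding abelian_on_def by blast

lemma defect_eq_s:
  assumes "g \<in> N" "g \<notin> Z_N" shows "defect g = s"
proof -
  have "\<exists>g. g \<in> N \<and> g \<notin> Z_N" using exists_noncommuting_pair_in_N not_in_Z_N_iff by blast
  then have "(SOME g. g \<in> N \<and> g \<notin> Z_N) \<in> N \<and> (SOME g. g \<in> N \<and> g \<notin> Z_N) \<notin> Z_N"
    by (rule someI_ex)
  then show ?thesis unfolding s_def using defect_eq_if_noncentral assms by blast
qed

lemma st_noncentral_in_N: "g \<in> N \<Longrightarrow> g \<notin> Z_N \<Longrightarrow> st g = g \<otimes> s"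
  using defect_eq_s[of g] inv_solve_left'[of s g "st g"] N_carrier[of g] unfolding defect_def
  by (metis inv_closed m_closed st_closed)

lemma s_in_N: "s \<in> N"
proof -
  obtain g h where "g \<in> N" "h \<in> N" "g \<otimes> h \<noteq> h \<otimes> g" using exists_noncommuting_pair_in_N by blast
  then have "g \<in> N" "g \<notin> Z_N" using noncommuting_not_in_Z_N by auto
  then show ?thesis
    using defect_eq_s N_carrier unfolding defect_def by (metis inv_in_N_iff mult_in_N_iff st_in_N_iff inv_closed st_closed)
qed

lemma s_carrier [simp]: "s \<in> carrier G"
  using s_in_N N_carrier by blast

lemma s_square: "s \<otimes> s = \<one>"
proof -
  obtain g h where gh: "g \<in> N" "h \<in> N" "g \<otimes> h \<noteq> h \<otimes> g" using exists_noncommuting_pair_in_N by blast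
  then have "inv s = s" using noncommuting_defect(2) defect_eq_s noncommuting_not_in_Z_N by metis
  then show ?thesis using r_inv[OF s_carrier] by simp
qed

lemma s_in_Z_N: "s \<in> Z_N"
  unfolding grp_center_iff
proof (intro conjI ballI)
  fix x assume x: "x \<in> N"
  show "s \<otimes> x = x \<otimes> s"
  proof (cases "x \<in> Z_N")
    case True
    then show ?thesis using s_in_N unfolding grp_center_iff by metis
  next
    case False
    have xc: "x \<in> carrier G" using x N_carrier by blast
    have "x \<otimes> (x \<otimes> s) = x \<otimes> s \<otimes> x" using commute_st[OF xc] st_noncentral_in_N[OF x False] by simp
    then show ?thesis using commute_mult_self_iff[of x s] xc by simp
  qed
qed (rule s_in_N)

lemma noncommuting_in_N_mult_s:
  assumes g: "g \<in> N" and h: "h \<in> N" and noncomm: "g \<otimes> h \<noteq> h \<otimes> g"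
  shows "h \<otimes> g = g \<otimes> h \<otimes> s"
proof -
  have gc: "g \<in> carrier G" and hc: "h \<in> carrier G" using g h N_carrier by auto
  have noncentral: "g \<notin> Z_N" "h \<notin> Z_N" "g \<otimes> h \<notin> Z_N" using noncommuting_not_in_Z_N[OF g h noncomm] by auto
  have gs: "g \<otimes> s = s \<otimes> g" using s_in_Z_N g unfolding grp_center_iff by metis
  have "g \<otimes> h \<otimes> s = st (g \<otimes> h)"
    using st_noncentral_in_N[of "g \<otimes> h"] noncentral g h gc hc by (simp add: mult_in_N_iff)
  also have "\<dots> = h \<otimes> s \<otimes> (g \<otimes> s)" using st_mult gc hc st_noncentral_in_N g h noncentral by simp
  also have "\<dots> = h \<otimes> (g \<otimes> s \<otimes> s)" using gc hc gs by (simp add: m_assoc)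
  also have "\<dots> = h \<otimes> g" using gc hc s_square by (simp add: m_assoc)
  finally show ?thesis by simp
qed

lemma s_neq_one: "s \<noteq> \<one>"
  using exists_noncommuting_pair_in_N noncommuting_in_N_mult_s N_carrier by fastforce

lemma st_in_Z_N:
  assumes z: "z \<in> Z_N" shows "st z = z"
proof -
  have zN: "z \<in> N" using z unfolding grp_center_iff by blast
  obtain n h where n: "n \<in> N" and h: "h \<in> N" and noncomm: "n \<otimes> h \<noteq> h \<otimes> n"
    using exists_noncommuting_pair_in_N by blast
  have carrier: "z \<in> carrier G" "n \<in> carrier G" "h \<in> carrier G" using zN n h N_carrier by auto
  have zh: "z \<otimes> h = h \<otimes> z" and zn: "z \<otimes> n = n \<otimes> z" and zs: "z \<otimes> s = s \<otimes> z"
    using z h n s_in_N unfolding grp_center_iff by auto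
  have "z \<otimes> n \<otimes> h \<noteq> h \<otimes> (z \<otimes> n)"
  proof
    assume "z \<otimes> n \<otimes> h = h \<otimes> (z \<otimes> n)"
    then have "z \<otimes> (n \<otimes> h) = z \<otimes> (h \<otimes> n)" using zh carrier by (simp add: m_assoc [symmetric])
    then show False using noncomm carrier by simp
  qed
  then have zn_noncentral: "z \<otimes> n \<notin> Z_N" using not_in_Z_N_iff[of "z \<otimes> n"] zN n h carrier by (auto simp: mult_in_N_iff)
  have "n \<otimes> s \<otimes> st z = st (z \<otimes> n)"
    using st_mult carrier st_noncentral_in_N[OF n] noncommuting_not_in_Z_N[OF n h noncomm] by simp
  also have "\<dots> = z \<otimes> n \<otimes> s" using st_noncentral_in_N[OF _ zn_noncentral] zN n carrier by (simp add: mult_in_N_iff)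
  also have "\<dots> = n \<otimes> s \<otimes> z" using zn zs carrier by (simp add: m_assoc)
  finally show ?thesis using carrier by (simp add: m_assoc)
qed

lemma Z_N_subset_Z:
  assumes z: "z \<in> Z_N" shows "z \<in> Z"
proof -
  have zN: "z \<in> N" using z unfolding grp_center_iff by blast
  have zc: "z \<in> carrier G" using zN N_carrier by blast
  have "z \<otimes> x = x \<otimes> z" if x: "x \<in> carrier G" for x
  proof (cases "x \<in> N")
    case True
    then show ?thesis using z unfolding grp_center_iff by blast
  next
    case False
    show ?thesis
    proof (rule ccontr)
      assume "z \<otimes> x \<noteq> x \<otimes> z"
      then have "z = inv x \<otimes> z \<otimes> x"
        using noncommuting_outside_N_st(3)[of x z] st_in_Z_N[OF z] x False zN by metis
      then show False using mult_eq_mult_iff_left_conj[of x z z] x zc \<open>z \<otimes> x \<noteq> x \<otimes> z\<close> by simp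
    qed
  qed
  then show ?thesis unfolding grp_center_iff using zc by blast
qed

lemma in_Z_N_iff: "g \<in> N \<Longrightarrow> g \<in> Z_N \<longleftrightarrow> g \<in> Z"
  using Z_N_subset_Z N_carrier unfolding grp_center_iff by blast

lemma s_commute: "x \<in> carrier G \<Longrightarrow> s \<otimes> x = x \<otimes> s"
  using Z_N_subset_Z[OF s_in_Z_N] center_commute by blast

lemma s_mult_left_commute:
  assumes "x \<in> carrier G" "y \<in> carrier G" shows "x \<otimes> (s \<otimes> y) = s \<otimes> (x \<otimes> y)"
proof -
  have "x \<otimes> (s \<otimes> y) = x \<otimes> s \<otimes> y" using assms by (simp add: m_assoc)
  also have "\<dots> = s \<otimes> x \<otimes> y" using s_commute[of x] assms by simp
  finally show ?thesis using assms by (simp add: m_assoc)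
qed

lemma s_mult_s: "y \<in> carrier G \<Longrightarrow> s \<otimes> (s \<otimes> y) = y"
  using s_square by (simp add: m_assoc [symmetric])

lemma st_noncentral_outside_N: "a \<in> carrier G \<Longrightarrow> a \<notin> N \<Longrightarrow> a \<notin> Z \<Longrightarrow> st a = a"
  using central_if_commute_N noncommuting_outside_N_st(1) by blast

lemma exists_central_outside_N:
  assumes nontriv: "\<exists>g \<in> carrier G. \<sigma> g \<noteq> 1"
  shows "\<exists>a \<in> carrier G - N. a \<in> Z"
proof (rule ccontr)
  \<comment> \<open>Otherwise \<open>a \<notin> N\<close> conjugates every non-central element \<open>n\<close> of \<open>N\<close> to \<open>n \<otimes> s\<close>;
    applied to \<open>g\<close>, \<open>h\<close> and \<open>g \<otimes> h\<close> this forces \<open>s = \<one>\<close>.\<close>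
  assume no_central: "\<not> (\<exists>a \<in> carrier G - N. a \<in> Z)"
  obtain a where a: "a \<in> carrier G" "a \<notin> N" using nontriv by (auto simp: mem_N_iff)
  have conj: "a \<otimes> n = n \<otimes> s \<otimes> a" if n: "n \<in> N" "n \<notin> Z_N" for n
  proof -
    have nc: "n \<in> carrier G" using n N_carrier by blast
    have "a \<otimes> n \<notin> N" using a n nc by (simp add: mult_in_N_iff)
    then have "st (a \<otimes> n) = a \<otimes> n" using st_noncentral_outside_N no_central a nc by blast
    then show ?thesis
      using st_mult[of a n] st_noncentral_in_N[OF n] st_noncentral_outside_N no_central a nc by simp
  qed
  obtain g h where gh: "g \<in> N" "h \<in> N" "g \<otimes> h \<noteq> h \<otimes> g" using exists_noncommuting_pair_in_N by blast
  have carrier: "g \<in> carrier G" "h \<in> carrier G" using gh N_carrier by auto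
  note noncentral = noncommuting_not_in_Z_N[OF gh]
  have "a \<otimes> (g \<otimes> h) = g \<otimes> s \<otimes> (a \<otimes> h)"
    using conj[of g] gh noncentral a carrier by (simp add: m_assoc [symmetric])
  also have "\<dots> = g \<otimes> (s \<otimes> (h \<otimes> (s \<otimes> a)))"
    using conj[of h] gh noncentral a carrier by (simp add: m_assoc)
  also have "\<dots> = g \<otimes> h \<otimes> a"
    using s_mult_left_commute[of h "s \<otimes> a"] s_mult_s a carrier by (simp add: m_assoc)
  finally have "g \<otimes> h \<otimes> \<one> \<otimes> a = g \<otimes> h \<otimes> s \<otimes> a"
    using conj[of "g \<otimes> h"] gh noncentral a carrier by (simp add: mult_in_N_iff)
  then have "s = \<one>" using a carrier by (simp del: r_one)
  then show False using s_neq_one by simp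
qed

lemma st_central_outside_N:
  assumes a: "a \<in> carrier G" "a \<notin> N" "a \<in> Z" shows "st a = s \<otimes> a"
proof -
  obtain n h where n: "n \<in> N" and h: "h \<in> N" and noncomm: "n \<otimes> h \<noteq> h \<otimes> n"
    using exists_noncommuting_pair_in_N by blast
  have nc: "n \<in> carrier G" and hc: "h \<in> carrier G" using n h N_carrier by auto
  have n_noncentral: "n \<notin> Z_N" using noncommuting_not_in_Z_N[OF n h noncomm] by blast
  have "a \<otimes> n \<notin> Z"
  proof
    assume "a \<otimes> n \<in> Z"
    then have "a \<otimes> (n \<otimes> h) = a \<otimes> (h \<otimes> n)"
      using center_commute[of "a \<otimes> n" h] center_commute[OF a(3) hc] a nc hc by (simp add: m_assoc [symmetric])
    then show False using noncomm a nc hc by simp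
  qed
  moreover have "a \<otimes> n \<notin> N" using a n nc by (simp add: mult_in_N_iff)
  ultimately have "st (a \<otimes> n) = a \<otimes> n" using st_noncentral_outside_N a nc by simp
  then have "n \<otimes> (s \<otimes> st a) = n \<otimes> a"
    using st_mult[of a n] st_noncentral_in_N[OF n n_noncentral] center_commute[OF a(3) nc] a nc
    by (simp add: m_assoc)
  then have "s \<otimes> (s \<otimes> st a) = s \<otimes> a" using a nc by simp
  then show ?thesis using s_mult_s[of "st a"] a by simp
qed

lemma st_eq:
  assumes g: "g \<in> carrier G"
  shows "st g = (if g \<in> N \<inter> Z \<or> g \<in> (carrier G - N) - Z then g else s \<otimes> g)"
proof (cases "g \<in> N")
  case True
  show ?thesis
  proof (cases "g \<in> Z")
    case True
    then show ?thesis using st_in_Z_N in_Z_N_iff \<open>g \<in> N\<close> by simp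
  next
    case False
    then have "g \<notin> Z_N" using in_Z_N_iff \<open>g \<in> N\<close> by blast
    then show ?thesis using False st_noncentral_in_N s_commute g \<open>g \<in> N\<close> by simp
  qed
next
  case False
  then show ?thesis using st_noncentral_outside_N st_central_outside_N g by auto
qed

lemma noncentral_mult_s:
  assumes g: "g \<in> carrier G" "g \<notin> Z" and h: "h \<in> carrier G" "h \<notin> Z" and gh: "g \<otimes> h \<notin> Z"
  shows "h \<otimes> g = s \<otimes> (g \<otimes> h)"
proof -
  have st_noncentral: "st x = (if x \<in> N then s \<otimes> x else x)" if "x \<in> carrier G" "x \<notin> Z" for x
    using st_eq that by auto
  have st_gh: "st (g \<otimes> h) = st h \<otimes> st g" using st_mult g h by blast
  consider "g \<in> N" "h \<in> N" | "g \<in> N" "h \<notin> N" | "g \<notin> N" "h \<in> N" | "g \<notin> N" "h \<notin> N"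
    by blast
  then show ?thesis
  proof cases
    case 1
    then have "s \<otimes> (g \<otimes> h) = s \<otimes> h \<otimes> (s \<otimes> g)"
      using st_gh st_noncentral g h gh by (simp add: mult_in_N_iff)
    also have "\<dots> = h \<otimes> g"
      using s_mult_left_commute[of h g] s_mult_s g h by (simp add: m_assoc)
    finally show ?thesis by simp
  next
    case 2
    then have "g \<otimes> h = s \<otimes> (h \<otimes> g)"
      using st_gh st_noncentral g h gh s_mult_left_commute[of h g] by (simp add: mult_in_N_iff)
    then show ?thesis using s_mult_s g h by simp
  next
    case 3
    then have "g \<otimes> h = s \<otimes> (h \<otimes> g)"
      using st_gh st_noncentral g h gh by (simp add: mult_in_N_iff m_assoc)
    then show ?thesis using s_mult_s g h by simp
  next
    case 4
    then show ?thesis using st_gh st_noncentral g h gh by (simp add: mult_in_N_iff)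
  qed
qed

lemma noncommuting_mult_s:
  assumes g: "g \<in> carrier G" and h: "h \<in> carrier G" and noncomm: "g \<otimes> h \<noteq> h \<otimes> g"
  shows "h \<otimes> g = s \<otimes> (g \<otimes> h)"
proof (rule noncentral_mult_s[OF g _ h])
  show "g \<notin> Z" "h \<notin> Z" using center_commute[of g h] center_commute[of h g] g h noncomm by auto
  show "g \<otimes> h \<notin> Z" using commute_if_mult_central g h noncomm by blast
qed

lemma commutator_eq_s:
  assumes g: "g \<in> carrier G" and h: "h \<in> carrier G" and noncomm: "g \<otimes> h \<noteq> h \<otimes> g"
  shows "commutator G g h = s"
proof -
  have "commutator G g h = inv (h \<otimes> g) \<otimes> (s \<otimes> (h \<otimes> g))"
    using commutator_eq_inv_mult[OF g h] noncommuting_mult_s[OF g h noncomm] s_mult_s g h by simp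
  then show ?thesis using s_mult_left_commute[of "inv (h \<otimes> g)" "h \<otimes> g"] g h by simp
qed

lemma commutators_eq: "commutators G = {\<one>, s}"
proof
  show "commutators G \<subseteq> {\<one>, s}"
    unfolding commutators_def using commutator_eq_s commutator_eq_one_iff by blast
  obtain g h where gh: "g \<in> N" "h \<in> N" "g \<otimes> h \<noteq> h \<otimes> g" using exists_noncommuting_pair_in_N by blast
  then have "s = commutator G g h" using commutator_eq_s N_carrier by simp
  moreover have "\<one> = commutator G \<one> \<one>" using commutator_eq_one_iff[of \<one> \<one>] by simp
  ultimately show "{\<one>, s} \<subseteq> commutators G" unfolding commutators_def using gh N_carrier by blast
qed

lemma LC_group_carrier: "LC_group G (carrier G)"
  unfolding LC_group_def
proof (intro conjI ballI)
  show "\<not> abelian_on G (carrier G)" using N_nonabelian N_carrier unfolding abelian_on_def by blast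
  fix g h assume g: "g \<in> carrier G" and h: "h \<in> carrier G"
  show "g \<otimes> h = h \<otimes> g \<longleftrightarrow> g \<in> Z \<or> h \<in> Z \<or> g \<otimes> h \<in> Z"
  proof
    assume comm: "g \<otimes> h = h \<otimes> g"
    show "g \<in> Z \<or> h \<in> Z \<or> g \<otimes> h \<in> Z"
    proof (rule ccontr)
      assume "\<not> (g \<in> Z \<or> h \<in> Z \<or> g \<otimes> h \<in> Z)"
      then have "g \<otimes> h = s \<otimes> (g \<otimes> h)" using noncentral_mult_s[of g h] g h comm by auto
      then show False using s_neq_one g h by simp
    qed
  next
    assume "g \<in> Z \<or> h \<in> Z \<or> g \<otimes> h \<in> Z"
    then show "g \<otimes> h = h \<otimes> g"
      using center_commute[of g h] center_commute[of h g] commute_if_mult_central[of g h] g h by auto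
  qed
qed

lemma LC_group_N: "LC_group G N"
  unfolding LC_group_def
proof (intro conjI ballI)
  fix g h assume g: "g \<in> N" and h: "h \<in> N"
  then have "g \<otimes> h \<in> N" using N_carrier by (simp add: mult_in_N_iff)
  then show "g \<otimes> h = h \<otimes> g \<longleftrightarrow> g \<in> Z_N \<or> h \<in> Z_N \<or> g \<otimes> h \<in> Z_N"
    using LC_group_carrier g h N_carrier in_Z_N_iff unfolding LC_group_def by blast
qed (rule N_nonabelian)

lemma LC_conditions_if_nonabelian_N:
  assumes "\<exists>g \<in> carrier G. \<sigma> g \<noteq> 1"
  shows LC_conditions
proof -
  obtain g0 where "g0 \<in> carrier G - N" "g0 \<in> Z" using exists_central_outside_N[OF assms] by blast
  then have "\<exists>g0 \<in> (carrier G - N) \<inter> Z. st g0 = s \<otimes> g0" using st_central_outside_N by blast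
  then show ?thesis
    unfolding LC_conditions_def using LC_group_N LC_group_carrier s_neq_one commutators_eq st_eq by blast
qed

end

context oriented_group_involution
begin

lemma normal_pairs_iff_conditions:
  assumes nonab: "\<not> abelian_on G (carrier G)" and nontriv: "\<exists>g \<in> carrier G. \<sigma> g \<noteq> 1"
  shows "(\<forall>g \<in> carrier G. \<forall>h \<in> carrier G. normal_pair g h) \<longleftrightarrow>
    abelian_kernel_conditions \<or> LC_conditions"
proof
  assume pairs: "\<forall>g \<in> carrier G. \<forall>h \<in> carrier G. normal_pair g h"
  interpret normal_oriented_involution G st \<sigma> N by unfold_locales (rule pairs)
  show "abelian_kernel_conditions \<or> LC_conditions"
  proof (cases "abelian_on G N")
    case True
    then show ?thesis using abelian_kernel_conditions_if_abelian_N nonab by blast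
  next
    case False
    interpret nonabelian_kernel G st \<sigma> N by unfold_locales (rule False)
    show ?thesis using LC_conditions_if_nonabelian_N nontriv by blast
  qed
next
  assume "abelian_kernel_conditions \<or> LC_conditions"
  then show "\<forall>g \<in> carrier G. \<forall>h \<in> carrier G. normal_pair g h"
    using normal_pairs_if_abelian_kernel_conditions normal_pairs_if_LC_conditions by blast
qed

end

theorem theorem5:
  fixes G :: "('a, 'b) monoid_scheme" and st :: "'a \<Rightarrow> 'a" and \<sigma> :: "'a \<Rightarrow> int"
  assumes "group G"
    and char: "(2::'f::field) \<noteq> 0"
    and nonab: "\<not> abelian_on G (carrier G)"
    and inv: "group_involution G st"
    and ori: "orientation G \<sigma>"
    and nontriv: "\<exists>g \<in> carrier G. \<sigma> g \<noteq> 1"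
    and N_def: "N = {g \<in> carrier G. \<sigma> g = 1}"
    and ggst: "\<forall>g \<in> carrier G. g \<otimes>\<^bsub>G\<^esub> st g \<in> N"
  shows "ga_normal G st \<sigma> (group_algebra G :: ('a \<Rightarrow> 'f) set) \<longleftrightarrow>
     ((abelian_on G N \<and> (\<forall>a \<in> carrier G - N. st a = a) \<and>
       (\<forall>n \<in> N. \<forall>a \<in> carrier G - N.
          st n = inv\<^bsub>G\<^esub> a \<otimes>\<^bsub>G\<^esub> n \<otimes>\<^bsub>G\<^esub> a \<and> st n = a \<otimes>\<^bsub>G\<^esub> n \<otimes>\<^bsub>G\<^esub> inv\<^bsub>G\<^esub> a))
     \<or>
      (LC_group G N \<and> LC_group G (carrier G) \<and>
       (\<exists>s. s \<noteq> \<one>\<^bsub>G\<^esub> \<and> commutators G = {\<one>\<^bsub>G\<^esub>, s} \<and>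
         (\<exists>g0 \<in> (carrier G - N) \<inter> grp_center G (carrier G). st g0 = s \<otimes>\<^bsub>G\<^esub> g0) \<and>
         (\<forall>g \<in> carrier G. st g =
            (if g \<in> N \<inter> grp_center G (carrier G) \<or> g \<in> (carrier G - N) - grp_center G (carrier G)
             then g else s \<otimes>\<^bsub>G\<^esub> g)))))"
proof -
  interpret oriented_group_involution G st \<sigma> N
    using assms(1) inv ori N_def ggst
    by (simp add: oriented_group_involution_def oriented_group_involution_axioms_def)
  have "ga_normal G st \<sigma> (group_algebra G :: ('a \<Rightarrow> 'f) set) \<longleftrightarrow>
      (\<forall>g \<in> carrier G. \<forall>h \<in> carrier G. normal_pair g h)"
    by (rule ga_normal_iff_normal_pairs[OF char])
  also have "\<dots> \<longleftrightarrow> abelian_kernel_conditions \<or> LC_conditions"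
    by (rule normal_pairs_iff_conditions[OF nonab nontriv])
  finally show ?thesis unfolding abelian_kernel_conditions_def LC_conditions_def .
qed

end
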